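(* For every finite simple configuration $c$ of size $n\times m$ and every $t\in\mathbb{N}$, we have $B_c^t(\phi(c))=\phi(F^t(c))$, where $F^t(c)$ is restricted to the rectangle $V=\{0,\dots,n-1\}\times\{0,\dots,m-1\}$.
   Context: Configurations are maps $c:\mathbb{Z}^2\to\mathbb{N}\cup\{-\infty\}$, with $c_v$ the value at $v$. For $(i,j)\in\mathbb{Z}^2$ let $N(i,j)=\{(i,j+1),(i+1,j),(i,j-1),(i-1,j)\}$. The freezing sandpile map $F$ is defined for all $v$ by $F(c)_v=-\infty$ if $c_v\ge 4$, and $F(c)_v=c_v+\sum_{u\in N(v)}\mathbf{1}[c_u\ge 4]$ otherwise (with $-\infty+k=-\infty$, and $-\infty\geq 4$ false). A finite configuration of size $n\times m$ is a configuration with $c_v\in\mathbb{N}$ for $v$ in $V=\{0,\dots,n-1\}\times\{0,\dots,m-1\}$ and $c_v=-\infty$ for all $v\notin V$; it is simple if $c_v\in\{0,1,2,3,4\}$ for all $v\in V$. Let $G=(V,E)$ be the subgraph of the grid induced by $V$, with $E=\{(u,v)\in V^2: v\in N(u)\}$, and for $v\in V$ let $N_G(v)=N(v)\cap V$. Boolean configurations are elements of $\{0,1\}^V$. Define local freezing functions on $x\in\{0,1\}^V$: $f^{\wedge}_v(x)=1$ iff $x_v=1$ or $\sum_{u\in N_G(v)}x_u=4$; $f^{M}_v(x)=1$ iff $x_v=1$ or $\sum_{u\in N_G(v)}x_u>2$; $f^{m}_v(x)=1$ iff $x_v=1$ or $\sum_{u\in N_G(v)}x_u\ge 2$; $f^{\vee}_v(x)=1$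 iff $x_v=1$ or $\sum_{u\in N_G(v)}x_u\ge1$; $f^{1}_v(x)=1$ always. For a finite simple configuration $c$, the Boolean network $B_c:\{0,1\}^V\to\{0,1\}^V$ is $B_c(x)_v=f_v(x)$ where $f_v$ is $f^\wedge,f^M,f^m,f^\vee,f^1$ according as $c_v=0,1,2,3,4$ respectively. For a configuration $c$, $\phi(c)\in\{0,1\}^V$ is given by $\phi(c)_v=1$ if $c_v=-\infty$ and $0$ otherwise. *)

theory Defs
  imports Main
begin

text \<open>Values in N \<union> {-\<infinity>}: None represents -\<infinity>, Some k represents k.\<close>
type_synonym config = "int \<times> int \<Rightarrow> nat option"

definition nbrs :: "int \<times> int \<Rightarrow> (int \<times> int) set" where
  "nbrs v = {(fst v, snd v + 1), (fst v + 1, snd v), (fst v, snd v - 1), (fst v - 1, snd v)}"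

definition ge4 :: "nat option \<Rightarrow> bool" where
  "ge4 a = (case a of None \<Rightarrow> False | Some k \<Rightarrow> 4 \<le> k)"

definition freeze :: "config \<Rightarrow> config" where
  "freeze c v = (if ge4 (c v) then None
     else (case c v of None \<Rightarrow> None
           | Some k \<Rightarrow> Some (k + card {u \<in> nbrs v. ge4 (c u)})))"

definition rect :: "nat \<Rightarrow> nat \<Rightarrow> (int \<times> int) set" where
  "rect n m = {(i, j). 0 \<le> i \<and> i < int n \<and> 0 \<le> j \<and> j < int m}"

definition finite_config :: "nat \<Rightarrow> nat \<Rightarrow> config \<Rightarrow> bool" where
  "finite_config n m c = (\<forall>v. (v \<in> rect n m \<longleftrightarrow> c v \<noteq> None))"

definition simple_config :: "nat \<Rightarrow> nat \<Rightarrow> config \<Rightarrow> bool" where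
  "simple_config n m c = (finite_config n m c \<and>
      (\<forall>v \<in> rect n m. \<exists>k. c v = Some k \<and> k \<le> 4))"

text \<open>Boolean configurations: functions on Z^2 to bool; only values on rect n m matter
  (values outside V are set to False).\<close>
definition nbsum :: "nat \<Rightarrow> nat \<Rightarrow> (int \<times> int \<Rightarrow> bool) \<Rightarrow> int \<times> int \<Rightarrow> nat" where
  "nbsum n m x v = card {u \<in> nbrs v \<inter> rect n m. x u}"

definition local_f :: "nat \<Rightarrow> nat \<Rightarrow> nat \<Rightarrow> (int \<times> int \<Rightarrow> bool) \<Rightarrow> int \<times> int \<Rightarrow> bool" where
  "local_f n m k x v =
     (if k = 0 then x v \<or> nbsum n m x v = 4
      else if k = 1 then x v \<or> nbsum n m x v > 2
      else if k = 2 then x v \<or> nbsum n m x v \<ge> 2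
      else if k = 3 then x v \<or> nbsum n m x v \<ge> 1
      else True)"

definition bnet :: "nat \<Rightarrow> nat \<Rightarrow> config \<Rightarrow> (int \<times> int \<Rightarrow> bool) \<Rightarrow> (int \<times> int \<Rightarrow> bool)" where
  "bnet n m c x v = (v \<in> rect n m \<and> local_f n m (the (c v)) x v)"

definition phi :: "nat \<Rightarrow> nat \<Rightarrow> config \<Rightarrow> (int \<times> int \<Rightarrow> bool)" where
  "phi n m c v = (v \<in> rect n m \<and> c v = None)"

end

theory Submission
  imports Defs
begin

text \<open>A cell topples exactly once, in the step in which it freezes, so along the freezing
  dynamics the value of a cell that is not yet frozen is its initial value plus the number of
  its frozen neighbours in the rectangle. For initial values \<open>k \<le> 4\<close>, the condition
  \<open>k + s \<ge> 4\<close> on the number \<open>s \<le> 4\<close> of frozen neighbours is exactly the threshold of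
  the local function attached to \<open>k\<close>; hence one freezing step is one step of the Boolean
  network on frozen cells.\<close>

definition counts_frozen_nbrs :: "nat \<Rightarrow> nat \<Rightarrow> config \<Rightarrow> config \<Rightarrow> bool" where
  "counts_frozen_nbrs n m c d \<longleftrightarrow>
     (\<forall>v. v \<notin> rect n m \<longrightarrow> d v = None) \<and>
     (\<forall>v \<in> rect n m. d v \<noteq> None \<longrightarrow> d v = Some (the (c v) + nbsum n m (phi n m d) v))"

lemma finite_nbrs: "finite (nbrs v)"
  by (simp add: nbrs_def)

lemma card_nbrs_le: "card (nbrs v) \<le> 4"
  unfolding nbrs_def
  using card_length[of "[(fst v, snd v + 1), (fst v + 1, snd v), (fst v, snd v - 1), (fst v - 1, snd v)]"]
  by simp

lemma nbsum_le: "nbsum n m x v \<le> 4"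
proof -
  have "nbsum n m x v \<le> card (nbrs v)"
    unfolding nbsum_def by (rule card_mono[OF finite_nbrs]) auto
  then show ?thesis
    using card_nbrs_le[of v] by simp
qed

lemma phi_freeze:
  "phi n m (freeze d) u \<longleftrightarrow> u \<in> rect n m \<and> (d u = None \<or> ge4 (d u))"
  by (auto simp: phi_def freeze_def ge4_def split: option.splits)

lemma nbsum_phi_freeze:
  assumes "\<forall>u. u \<notin> rect n m \<longrightarrow> d u = None"
  shows "nbsum n m (phi n m (freeze d)) v = nbsum n m (phi n m d) v + card {u \<in> nbrs v. ge4 (d u)}"
proof -
  have "ge4 (d u) \<Longrightarrow> u \<in> rect n m" for u
    using assms by (cases "u \<in> rect n m") (auto simp: ge4_def)
  then have "{u \<in> nbrs v \<inter> rect n m. phi n m (freeze d) u}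
      = {u \<in> nbrs v \<inter> rect n m. phi n m d u} \<union> {u \<in> nbrs v. ge4 (d u)}"
    unfolding phi_freeze by (auto simp: phi_def)
  moreover have "{u \<in> nbrs v \<inter> rect n m. phi n m d u} \<inter> {u \<in> nbrs v. ge4 (d u)} = {}"
    by (auto simp: phi_def ge4_def)
  ultimately show ?thesis
    unfolding nbsum_def by (simp add: card_Un_disjoint finite_nbrs)
qed

lemma counts_frozen_nbrs_init:
  assumes "finite_config n m c"
  shows "counts_frozen_nbrs n m c c"
proof -
  have "phi n m c = (\<lambda>_. False)"
    using assms unfolding phi_def finite_config_def by fastforce
  then have "nbsum n m (phi n m c) v = 0" for v
    by (simp add: nbsum_def)
  with assms show ?thesis
    by (auto simp: counts_frozen_nbrs_def finite_config_def)
qed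

lemma counts_frozen_nbrs_freeze:
  assumes "counts_frozen_nbrs n m c d"
  shows "counts_frozen_nbrs n m c (freeze d)"
  unfolding counts_frozen_nbrs_def
proof (intro conjI allI ballI impI)
  have outside: "\<forall>u. u \<notin> rect n m \<longrightarrow> d u = None"
    using assms by (simp add: counts_frozen_nbrs_def)
  then show "freeze d v = None" if "v \<notin> rect n m" for v
    using that by (simp add: freeze_def ge4_def del: split_paired_All)
  fix v assume v: "v \<in> rect n m" and "freeze d v \<noteq> None"
  then obtain k where dv: "d v = Some k" and "\<not> ge4 (d v)"
    by (auto simp: freeze_def split: if_splits option.splits)
  then have "freeze d v = Some (k + card {u \<in> nbrs v. ge4 (d u)})"
    by (simp add: freeze_def)
  moreover have "k = the (c v) + nbsum n m (phi n m d) v"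
    using assms v dv by (auto simp: counts_frozen_nbrs_def)
  ultimately show "freeze d v = Some (the (c v) + nbsum n m (phi n m (freeze d)) v)"
    by (simp add: nbsum_phi_freeze[OF outside])
qed

lemma counts_frozen_nbrs_funpow:
  "finite_config n m c \<Longrightarrow> counts_frozen_nbrs n m c ((freeze ^^ t) c)"
  by (induction t) (simp_all add: counts_frozen_nbrs_init counts_frozen_nbrs_freeze)

lemma bnet_phi:
  assumes c: "simple_config n m c" and d: "counts_frozen_nbrs n m c d"
  shows "bnet n m c (phi n m d) = phi n m (freeze d)"
proof
  fix v
  show "bnet n m c (phi n m d) v = phi n m (freeze d) v"
  proof (cases "v \<in> rect n m")
    case False
    then show ?thesis by (simp add: bnet_def phi_def)
  next
    case v: True
    obtain k where ck: "c v = Some k" "k \<le> 4"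
      using c v by (auto simp: simple_config_def)
    show ?thesis
    proof (cases "d v")
      case None
      with v show ?thesis
        by (simp add: bnet_def phi_def local_f_def freeze_def ge4_def)
    next
      case (Some j)
      with d v ck have "j = k + nbsum n m (phi n m d) v"
        by (auto simp: counts_frozen_nbrs_def)
      moreover have "k = 0 \<or> k = 1 \<or> k = 2 \<or> k = 3 \<or> k = 4"
        using ck by auto
      ultimately show ?thesis
        using v Some ck nbsum_le[of n m "phi n m d" v]
        by (auto simp: bnet_def phi_def local_f_def freeze_def ge4_def)
    qed
  qed
qed

lemma bnet_funpow_phi:
  assumes "simple_config n m c"
  shows "(bnet n m c ^^ t) (phi n m c) = phi n m ((freeze ^^ t) c)"
proof (induction t)
  case (Suc t)
  have "counts_frozen_nbrs n m c ((freeze ^^ t) c)"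
    using assms by (simp add: counts_frozen_nbrs_funpow simple_config_def)
  with Suc show ?case
    by (simp add: bnet_phi[OF assms])
qed simp

theorem proposition1:
  fixes n m t :: nat and c :: config
  assumes "simple_config n m c"
  shows "\<forall>v \<in> rect n m. (bnet n m c ^^ t) (phi n m c) v = phi n m ((freeze ^^ t) c) v"
  by (simp add: bnet_funpow_phi[OF assms])

end
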